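(* Let $P$ be (the right-angled hyperbolic realization of) the composition of compact right-angled hyperbolic polyhedra $P_1$ and $P_2$ along $k$-gonal faces $F_1\subset P_1$, $F_2\subset P_2$. Then $$\Gamma_P \cong \Gamma_{(P_1,F_1)} *_G \Gamma_{(P_2,F_2)}.$$ Here $G$ denotes $\Gamma_{F_1}\cong\Gamma_{F_2}$, embedded in $\Gamma_{(P_1,F_1)}$ and $\Gamma_{(P_2,F_2)}$ as these subgroups and identified with each other via the isomorphism induced by the face identification $F_1\cong F_2$.
   Context: For a compact right-angled hyperbolic polyhedron $P$ with faces $F_1,\dots,F_m$, the reflection group $\Gamma_P$ is generated by the reflections $r_i$ in the planes supporting the faces $F_i$. It has presentation $$\langle r_1,\dots,r_m \mid r_i^2=1,\ (r_ir_j)^2=1 \text{ whenever } F_i,F_j \text{ are adjacent}\rangle.$$ For a face $F$ of $P$, $\Gamma_{(P,F)}$ is the subgroup generated by reflections in all faces of $P$ other than $F$. For $i=1,2$, $\Gamma_{F_i}\subset \Gamma_{(P_i,F_i)}$ is the subgroup generated by the reflections in the $k$ faces of $P_i$ adjacent to $F_i$; it is the reflection group of a right-angled $k$-gon. Composition: glue $P_1,P_2$ along $F_1,F_2$ via a combinatorial isomorphism, delete the interiors of the $k$ edges of the identified face, and demote their endpoints to non-vertices. Faces adjacent to $F_1$ merge with the corresponding faces adjacent to $F_2$. The result is realizable as a right-angled hyperbolic polyhedron. *)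

theory Defs
  imports "HOL-Algebra.Algebra"
begin

text \<open>The group with presentation < r_v (v in V) | r_v^2 = 1, (r_u r_v)^2 = 1 for E u v >
  is built as the quotient of the words over V by the congruence generated by the
  relators (all generators are involutions, so positive words suffice).\<close>

inductive racg_eq :: "'a set \<Rightarrow> ('a \<Rightarrow> 'a \<Rightarrow> bool) \<Rightarrow> 'a list \<Rightarrow> 'a list \<Rightarrow> bool"
  for V :: "'a set" and E :: "'a \<Rightarrow> 'a \<Rightarrow> bool" where
  refl: "set xs \<subseteq> V \<Longrightarrow> racg_eq V E xs xs"
| sym: "racg_eq V E xs ys \<Longrightarrow> racg_eq V E ys xs"
| trans: "racg_eq V E xs ys \<Longrightarrow> racg_eq V E ys zs \<Longrightarrow> racg_eq V E xs zs"
| cancel_sq: "set xs \<subseteq> V \<Longrightarrow> set ys \<subseteq> V \<Longrightarrow> a \<in> V \<Longrightarrow>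
     racg_eq V E (xs @ [a, a] @ ys) (xs @ ys)"
| cancel_comm: "set xs \<subseteq> V \<Longrightarrow> set ys \<subseteq> V \<Longrightarrow> a \<in> V \<Longrightarrow> b \<in> V \<Longrightarrow> E a b \<Longrightarrow>
     racg_eq V E (xs @ [a, b, a, b] @ ys) (xs @ ys)"

definition racg_class :: "'a set \<Rightarrow> ('a \<Rightarrow> 'a \<Rightarrow> bool) \<Rightarrow> 'a list \<Rightarrow> 'a list set" where
  "racg_class V E xs = {ys. racg_eq V E xs ys}"

definition racg :: "'a set \<Rightarrow> ('a \<Rightarrow> 'a \<Rightarrow> bool) \<Rightarrow> 'a list set monoid" where
  "racg V E = \<lparr>carrier = {racg_class V E xs | xs. set xs \<subseteq> V},
               monoid.mult = (\<lambda>S T. {zs. \<exists>xs\<in>S. \<exists>ys\<in>T. racg_eq V E (xs @ ys) zs}),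
               one = racg_class V E []\<rparr>"

definition racg_gen :: "'a set \<Rightarrow> ('a \<Rightarrow> 'a \<Rightarrow> bool) \<Rightarrow> 'a \<Rightarrow> 'a list set" where
  "racg_gen V E v = racg_class V E [v]"

definition racg_induced :: "'b set \<Rightarrow> ('b \<Rightarrow> 'b \<Rightarrow> bool) \<Rightarrow> ('a \<Rightarrow> 'b) \<Rightarrow> 'a list set \<Rightarrow> 'b list set" where
  "racg_induced V E m S = {zs. \<exists>xs\<in>S. racg_eq V E (map m xs) zs}"

text \<open>Adjacency of the sides of a k-gon whose sides are labelled 0..k-1 in cyclic order.\<close>
definition cyc_adj :: "nat \<Rightarrow> nat \<Rightarrow> nat \<Rightarrow> bool" where
  "cyc_adj k i j \<longleftrightarrow> i < k \<and> j < k \<and> (j = Suc i mod k \<or> i = Suc j mod k)"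

definition face_structure :: "'a set \<Rightarrow> ('a \<Rightarrow> 'a \<Rightarrow> bool) \<Rightarrow> bool" where
  "face_structure V E \<longleftrightarrow> finite V \<and> (\<forall>a b. E a b \<longrightarrow> a \<in> V \<and> b \<in> V \<and> a \<noteq> b \<and> E b a)"

text \<open>F is a k-gonal face whose adjacent faces, in cyclic order, are c 0, ..., c (k-1);
  two faces adjacent to F are adjacent to each other exactly when they are cyclically
  consecutive (as in a compact right-angled polyhedron: no prismatic 3-circuits).\<close>
definition kgon_face :: "'a set \<Rightarrow> ('a \<Rightarrow> 'a \<Rightarrow> bool) \<Rightarrow> 'a \<Rightarrow> nat \<Rightarrow> (nat \<Rightarrow> 'a) \<Rightarrow> bool" where
  "kgon_face V E F k c \<longleftrightarrow> F \<in> V \<and> inj_on c {..<k} \<and> {a. E F a} = c ` {..<k} \<and>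
     (\<forall>i<k. \<forall>j<k. E (c i) (c j) \<longleftrightarrow> cyc_adj k i j)"

text \<open>Composition of P1 and P2 along F1 and F2, where the face identification sends the
  face c1 j adjacent to F1 to the face c2 j adjacent to F2.  Faces of the composition:
  faces of P1 other than F1 (tagged Inl; the faces c1 j stand for the merged faces) and
  faces of P2 other than F2 and not adjacent to F2 (tagged Inr).\<close>
definition comp_map2 :: "nat \<Rightarrow> (nat \<Rightarrow> 'a) \<Rightarrow> (nat \<Rightarrow> 'b) \<Rightarrow> 'b \<Rightarrow> 'a + 'b" where
  "comp_map2 k c1 c2 y = (if \<exists>j<k. y = c2 j then Inl (c1 (THE j. j < k \<and> y = c2 j)) else Inr y)"

definition comp_faces :: "'a set \<Rightarrow> 'a \<Rightarrow> 'b set \<Rightarrow> 'b \<Rightarrow> nat \<Rightarrow> (nat \<Rightarrow> 'b) \<Rightarrow> ('a + 'b) set" where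
  "comp_faces V1 F1 V2 F2 k c2 = Inl ` (V1 - {F1}) \<union> Inr ` (V2 - {F2} - c2 ` {..<k})"

definition comp_adj :: "'a set \<Rightarrow> ('a \<Rightarrow> 'a \<Rightarrow> bool) \<Rightarrow> 'a \<Rightarrow> 'b set \<Rightarrow> ('b \<Rightarrow> 'b \<Rightarrow> bool) \<Rightarrow> 'b
     \<Rightarrow> nat \<Rightarrow> (nat \<Rightarrow> 'a) \<Rightarrow> (nat \<Rightarrow> 'b) \<Rightarrow> 'a + 'b \<Rightarrow> 'a + 'b \<Rightarrow> bool" where
  "comp_adj V1 E1 F1 V2 E2 F2 k c1 c2 x y \<longleftrightarrow>
     (\<exists>a b. a \<in> V1 - {F1} \<and> b \<in> V1 - {F1} \<and> E1 a b \<and> x = Inl a \<and> y = Inl b) \<or>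
     (\<exists>a b. a \<in> V2 - {F2} \<and> b \<in> V2 - {F2} \<and> E2 a b \<and>
        x = comp_map2 k c1 c2 a \<and> y = comp_map2 k c1 c2 b)"

end

theory Submission
  imports Defs
begin

text \<open>
  Everything is derived from the presentation of a right-angled Coxeter group
  racg V E by generators V and relators r_v^2, (r_u r_v)^2 for adjacent u, v:
  \<^item> racg V E is a group, generated by the reflections, and every assignment of
    elements of a group H to the generators satisfying the relators extends to a unique
    homomorphism (universal property of the presentation);
  \<^item> a map of adjacency graphs induces a homomorphism of reflection groups; if it is an
    embedding onto a full subgraph, the induced map has a retraction (send the other
    generators to 1), hence is injective and onto the generated ("standard") subgroup;
    the faces around a k-gonal face form such a full subgraph;
  \<^item> for the composition, the generators of the composed group are exactly the
    generators of P1 - F1 together with those of P2 - F2 not adjacent to F2, and the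
    relators of the composed group are those of the two pieces.  Hence compatible
    homomorphisms on the pieces glue, by the universal property, to a unique
    homomorphism on the composition, which is the universal property of the
    amalgamated product.
  The argument is purely combinatorial.
\<close>

lemma racg_eq_words: "racg_eq V E xs ys \<Longrightarrow> set xs \<subseteq> V \<and> set ys \<subseteq> V"
  by (induction rule: racg_eq.induct) auto

lemma racg_eq_context:
  assumes "racg_eq V E xs ys" and zs: "set zs \<subseteq> V" and ws: "set ws \<subseteq> V"
  shows "racg_eq V E (zs @ xs @ ws) (zs @ ys @ ws)"
  using assms(1)
proof (induction rule: racg_eq.induct)
  case (refl xs)
  then show ?case using zs ws by (intro racg_eq.refl) auto
next
  case (sym xs ys)
  then show ?case by (blast intro: racg_eq.sym)
next
  case (trans xs ys us)
  then show ?case by (blast intro: racg_eq.trans)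
next
  case (cancel_sq xs ys a)
  then show ?case using racg_eq.cancel_sq[of "zs @ xs" V "ys @ ws" a E] zs ws by simp
next
  case (cancel_comm xs ys a b)
  then show ?case using racg_eq.cancel_comm[of "zs @ xs" V "ys @ ws" a b E] zs ws by simp
qed

lemma racg_eq_append:
  assumes "racg_eq V E xs xs'" and "racg_eq V E ys ys'"
  shows "racg_eq V E (xs @ ys) (xs' @ ys')"
proof -
  have words: "set ys \<subseteq> V" "set xs' \<subseteq> V"
    using racg_eq_words[OF assms(1)] racg_eq_words[OF assms(2)] by auto
  have "racg_eq V E ([] @ xs @ ys) ([] @ xs' @ ys)"
    using assms(1) words by (intro racg_eq_context) auto
  moreover have "racg_eq V E (xs' @ ys @ []) (xs' @ ys' @ [])"
    using assms(2) words by (intro racg_eq_context) auto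
  ultimately show ?thesis by (auto intro: racg_eq.trans)
qed

lemma racg_eq_rev_cancel: "set xs \<subseteq> V \<Longrightarrow> racg_eq V E (rev xs @ xs) []"
proof (induction xs)
  case Nil
  then show ?case by (auto intro: racg_eq.refl)
next
  case (Cons a xs)
  then have "racg_eq V E (rev xs @ [a, a] @ xs) (rev xs @ xs)"
    by (intro racg_eq.cancel_sq) auto
  with Cons show ?case by (auto intro: racg_eq.trans)
qed

lemma racg_class_eq_iff:
  assumes "set xs \<subseteq> V" and "set ys \<subseteq> V"
  shows "racg_class V E xs = racg_class V E ys \<longleftrightarrow> racg_eq V E xs ys"
proof
  assume "racg_class V E xs = racg_class V E ys"
  moreover have "ys \<in> racg_class V E ys"
    using assms(2) by (simp add: racg_class_def racg_eq.refl)
  ultimately have "ys \<in> racg_class V E xs" by simp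
  then show "racg_eq V E xs ys" by (simp add: racg_class_def)
next
  assume "racg_eq V E xs ys"
  then show "racg_class V E xs = racg_class V E ys"
    by (auto simp: racg_class_def intro: racg_eq.trans racg_eq.sym)
qed

lemma racg_carrier_iff: "x \<in> carrier (racg V E) \<longleftrightarrow> (\<exists>xs. set xs \<subseteq> V \<and> x = racg_class V E xs)"
  by (auto simp: racg_def)

lemma racg_class_carrier: "set xs \<subseteq> V \<Longrightarrow> racg_class V E xs \<in> carrier (racg V E)"
  by (auto simp: racg_carrier_iff)

lemma racg_one: "\<one>\<^bsub>racg V E\<^esub> = racg_class V E []"
  by (simp add: racg_def)

lemma racg_class_mult:
  "set xs \<subseteq> V \<Longrightarrow> set ys \<subseteq> V \<Longrightarrow>
   racg_class V E xs \<otimes>\<^bsub>racg V E\<^esub> racg_class V E ys = racg_class V E (xs @ ys)"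
  unfolding racg_def racg_class_def
  by (auto intro: racg_eq.trans racg_eq_append racg_eq.refl racg_eq.sym)

lemma racg_group: "group (racg V E)"
proof (rule groupI)
  fix x y
  assume "x \<in> carrier (racg V E)" and "y \<in> carrier (racg V E)"
  then show "x \<otimes>\<^bsub>racg V E\<^esub> y \<in> carrier (racg V E)"
    by (auto simp: racg_carrier_iff[of x] racg_carrier_iff[of y] racg_class_mult racg_class_carrier)
next
  show "\<one>\<^bsub>racg V E\<^esub> \<in> carrier (racg V E)"
    by (simp add: racg_one racg_class_carrier)
next
  fix x y z
  assume "x \<in> carrier (racg V E)" "y \<in> carrier (racg V E)" "z \<in> carrier (racg V E)"
  then show "x \<otimes>\<^bsub>racg V E\<^esub> y \<otimes>\<^bsub>racg V E\<^esub> z = x \<otimes>\<^bsub>racg V E\<^esub> (y \<otimes>\<^bsub>racg V E\<^esub> z)"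
    by (auto simp: racg_carrier_iff racg_class_mult)
next
  fix x
  assume "x \<in> carrier (racg V E)"
  then show "\<one>\<^bsub>racg V E\<^esub> \<otimes>\<^bsub>racg V E\<^esub> x = x"
    by (auto simp: racg_carrier_iff racg_class_mult racg_one)
next
  fix x
  assume "x \<in> carrier (racg V E)"
  then obtain xs where xs: "set xs \<subseteq> V" "x = racg_class V E xs"
    by (auto simp: racg_carrier_iff)
  have "racg_class V E (rev xs) \<otimes>\<^bsub>racg V E\<^esub> x = \<one>\<^bsub>racg V E\<^esub>"
    using xs racg_eq_rev_cancel[OF xs(1)] by (simp add: racg_class_mult racg_one racg_class_eq_iff)
  moreover have "racg_class V E (rev xs) \<in> carrier (racg V E)"
    using xs by (simp add: racg_class_carrier)
  ultimately show "\<exists>y\<in>carrier (racg V E). y \<otimes>\<^bsub>racg V E\<^esub> x = \<one>\<^bsub>racg V E\<^esub>" by blast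
qed

lemma racg_gen_carrier: "v \<in> V \<Longrightarrow> racg_gen V E v \<in> carrier (racg V E)"
  by (auto simp: racg_carrier_iff racg_gen_def intro!: exI[of _ "[v]"])

lemma racg_class_Cons:
  assumes "a \<in> V" and "set xs \<subseteq> V"
  shows "racg_class V E (a # xs) = racg_gen V E a \<otimes>\<^bsub>racg V E\<^esub> racg_class V E xs"
  using racg_class_mult[of "[a]" V xs E] assms by (simp add: racg_gen_def)

lemma racg_gen_square:
  "v \<in> V \<Longrightarrow> racg_gen V E v \<otimes>\<^bsub>racg V E\<^esub> racg_gen V E v = \<one>\<^bsub>racg V E\<^esub>"
  unfolding racg_gen_def racg_one
  using racg_eq.cancel_sq[of "[]" V "[]" v E]
  by (simp add: racg_class_mult racg_class_eq_iff)

lemma racg_gen_commutator: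
  "u \<in> V \<Longrightarrow> v \<in> V \<Longrightarrow> E u v \<Longrightarrow>
   racg_gen V E u \<otimes>\<^bsub>racg V E\<^esub> racg_gen V E v \<otimes>\<^bsub>racg V E\<^esub>
     (racg_gen V E u \<otimes>\<^bsub>racg V E\<^esub> racg_gen V E v) = \<one>\<^bsub>racg V E\<^esub>"
  unfolding racg_gen_def racg_one
  using racg_eq.cancel_comm[of "[]" V "[]" u v E]
  by (simp add: racg_class_mult racg_class_eq_iff)

lemma racg_generated: "carrier (racg V E) = generate (racg V E) (racg_gen V E ` V)"
proof
  show "carrier (racg V E) \<subseteq> generate (racg V E) (racg_gen V E ` V)"
  proof
    fix x
    assume "x \<in> carrier (racg V E)"
    then obtain xs where xs: "set xs \<subseteq> V" "x = racg_class V E xs"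
      by (auto simp: racg_carrier_iff)
    have "racg_class V E xs \<in> generate (racg V E) (racg_gen V E ` V)"
      using xs(1)
    proof (induction xs)
      case Nil
      then show ?case by (metis generate.one racg_one)
    next
      case (Cons a xs)
      have "racg_gen V E a \<in> generate (racg V E) (racg_gen V E ` V)"
        using Cons.prems by (intro generate.incl) simp
      moreover have "racg_class V E xs \<in> generate (racg V E) (racg_gen V E ` V)"
        using Cons by simp
      ultimately show ?case
        using Cons.prems by (simp add: racg_class_Cons generate.eng)
    qed
    then show "x \<in> generate (racg V E) (racg_gen V E ` V)" using xs by simp
  qed
next
  show "generate (racg V E) (racg_gen V E ` V) \<subseteq> carrier (racg V E)"
  proof
    fix x
    assume "x \<in> generate (racg V E) (racg_gen V E ` V)"
    moreover have "racg_gen V E ` V \<subseteq> carrier (racg V E)"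
      by (auto intro: racg_gen_carrier)
    ultimately show "x \<in> carrier (racg V E)"
      using group.generate_in_carrier[OF racg_group] by blast
  qed
qed

lemma racg_hom_eqI:
  assumes H: "group H" and f: "f \<in> hom (racg V E) H" and g: "g \<in> hom (racg V E) H"
    and gens: "\<And>v. v \<in> V \<Longrightarrow> f (racg_gen V E v) = g (racg_gen V E v)"
    and x: "x \<in> carrier (racg V E)"
  shows "f x = g x"
proof -
  obtain xs where xs: "set xs \<subseteq> V" "x = racg_class V E xs"
    using x by (auto simp: racg_carrier_iff)
  have "f (racg_class V E xs) = g (racg_class V E xs)"
    using xs(1)
  proof (induction xs)
    case Nil
    then show ?case
      using hom_one[OF f racg_group H] hom_one[OF g racg_group H] by (simp add: racg_one)
  next
    case (Cons a xs)
    have in_carrier: "racg_gen V E a \<in> carrier (racg V E)" "racg_class V E xs \<in> carrier (racg V E)"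
      using Cons.prems racg_gen_carrier[of a V E] by (auto simp: racg_carrier_iff)
    then show ?case
      using Cons by (simp add: racg_class_Cons hom_mult[OF f] hom_mult[OF g] gens)
  qed
  then show ?thesis using xs by simp
qed

lemma racg_hom_image:
  assumes H: "group H" and f: "f \<in> hom (racg V E) H"
  shows "f ` carrier (racg V E) = generate H ((\<lambda>v. f (racg_gen V E v)) ` V)"
proof -
  interpret group_hom "racg V E" H f
    using H f by (intro group_hom.intro group_hom_axioms.intro racg_group)
  have "generate H (f ` racg_gen V E ` V) = f ` generate (racg V E) (racg_gen V E ` V)"
    by (intro generate_img) (auto intro: racg_gen_carrier)
  then show ?thesis by (simp add: image_image racg_generated[symmetric])
qed

section \<open>Universal property of the presentation\<close>

definition word_eval :: "('h, 'm) monoid_scheme \<Rightarrow> ('a \<Rightarrow> 'h) \<Rightarrow> 'a list \<Rightarrow> 'h" where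
  "word_eval H m xs = foldr (\<lambda>a r. m a \<otimes>\<^bsub>H\<^esub> r) xs \<one>\<^bsub>H\<^esub>"

lemma word_eval_simps [simp]:
  "word_eval H m [] = \<one>\<^bsub>H\<^esub>"
  "word_eval H m (a # xs) = m a \<otimes>\<^bsub>H\<^esub> word_eval H m xs"
  by (simp_all add: word_eval_def)

lemma word_eval_closed: "group H \<Longrightarrow> m ` set xs \<subseteq> carrier H \<Longrightarrow> word_eval H m xs \<in> carrier H"
  by (induction xs) (auto intro: group.is_monoid monoid.m_closed monoid.one_closed)

lemma word_eval_append:
  assumes H: "group H" and "m ` set xs \<subseteq> carrier H" and "m ` set ys \<subseteq> carrier H"
  shows "word_eval H m (xs @ ys) = word_eval H m xs \<otimes>\<^bsub>H\<^esub> word_eval H m ys"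
  using assms(2)
proof (induction xs)
  case Nil
  then show ?case using assms(3) by (simp add: word_eval_closed[OF H] group.is_monoid[OF H] monoid.l_one)
next
  case (Cons a xs)
  then show ?case using assms(3) by (simp add: word_eval_closed[OF H] group.is_monoid[OF H] monoid.m_assoc)
qed

lemma word_eval_cancel:
  assumes H: "group H" and cl: "m ` set (xs @ w @ ys) \<subseteq> carrier H"
    and w: "word_eval H m w = \<one>\<^bsub>H\<^esub>"
  shows "word_eval H m (xs @ w @ ys) = word_eval H m (xs @ ys)"
proof -
  have cl': "m ` set xs \<subseteq> carrier H" "m ` set w \<subseteq> carrier H" "m ` set ys \<subseteq> carrier H"
    using cl by auto
  have "word_eval H m (xs @ w @ ys) = word_eval H m xs \<otimes>\<^bsub>H\<^esub> (\<one>\<^bsub>H\<^esub> \<otimes>\<^bsub>H\<^esub> word_eval H m ys)"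
  proof -
    have "m ` set (w @ ys) \<subseteq> carrier H" using cl' by auto
    then show ?thesis
      using w word_eval_append[OF H cl'(1)] word_eval_append[OF H cl'(2,3)] by simp
  qed
  also have "\<dots> = word_eval H m (xs @ ys)"
    using cl' by (simp add: word_eval_append[OF H] word_eval_closed[OF H] group.is_monoid[OF H] monoid.l_one)
  finally show ?thesis .
qed

definition relators_hold :: "'a set \<Rightarrow> ('a \<Rightarrow> 'a \<Rightarrow> bool) \<Rightarrow> ('h, 'm) monoid_scheme \<Rightarrow> ('a \<Rightarrow> 'h) \<Rightarrow> bool" where
  "relators_hold V E H m \<longleftrightarrow> m ` V \<subseteq> carrier H \<and> (\<forall>v\<in>V. m v \<otimes>\<^bsub>H\<^esub> m v = \<one>\<^bsub>H\<^esub>) \<and>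
     (\<forall>u\<in>V. \<forall>v\<in>V. E u v \<longrightarrow> m u \<otimes>\<^bsub>H\<^esub> m v \<otimes>\<^bsub>H\<^esub> (m u \<otimes>\<^bsub>H\<^esub> m v) = \<one>\<^bsub>H\<^esub>)"

lemma relators_holdI:
  assumes H: "group H" and cl: "m ` V \<subseteq> carrier H"
    and sq: "\<And>v. v \<in> V \<Longrightarrow> m v \<otimes>\<^bsub>H\<^esub> m v = \<one>\<^bsub>H\<^esub>"
    and comm: "\<And>u v. u \<in> V \<Longrightarrow> v \<in> V \<Longrightarrow> E u v \<Longrightarrow> m u = \<one>\<^bsub>H\<^esub> \<or> m v = \<one>\<^bsub>H\<^esub> \<or>
                 m u \<otimes>\<^bsub>H\<^esub> m v \<otimes>\<^bsub>H\<^esub> (m u \<otimes>\<^bsub>H\<^esub> m v) = \<one>\<^bsub>H\<^esub>"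
  shows "relators_hold V E H m"
  unfolding relators_hold_def
proof (intro conjI ballI impI cl sq)
  interpret group H by (rule H)
  fix u v
  assume uv: "u \<in> V" "v \<in> V" "E u v"
  have in_H: "m u \<in> carrier H" "m v \<in> carrier H" using cl uv by auto
  from comm[OF uv]
  show "m u \<otimes>\<^bsub>H\<^esub> m v \<otimes>\<^bsub>H\<^esub> (m u \<otimes>\<^bsub>H\<^esub> m v) = \<one>\<^bsub>H\<^esub>"
  proof (elim disjE)
    assume "m u = \<one>\<^bsub>H\<^esub>"
    then show ?thesis using sq[OF uv(2)] in_H by simp
  next
    assume "m v = \<one>\<^bsub>H\<^esub>"
    then show ?thesis using sq[OF uv(1)] in_H by simp
  qed
qed

lemma relators_hold_hom:
  assumes H: "group H" and f: "f \<in> hom (racg V E) H"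
  shows "relators_hold V E H (\<lambda>v. f (racg_gen V E v))"
  unfolding relators_hold_def
proof (intro conjI ballI impI)
  show "(\<lambda>v. f (racg_gen V E v)) ` V \<subseteq> carrier H"
    using hom_in_carrier[OF f racg_gen_carrier] by auto
next
  fix v
  assume "v \<in> V"
  then show "f (racg_gen V E v) \<otimes>\<^bsub>H\<^esub> f (racg_gen V E v) = \<one>\<^bsub>H\<^esub>"
    using racg_gen_square[of v V E] hom_one[OF f racg_group H]
    by (simp add: hom_mult[OF f, symmetric] racg_gen_carrier)
next
  fix u v
  assume uv: "u \<in> V" "v \<in> V" "E u v"
  interpret racg: group "racg V E" by (rule racg_group)
  show "f (racg_gen V E u) \<otimes>\<^bsub>H\<^esub> f (racg_gen V E v) \<otimes>\<^bsub>H\<^esub> (f (racg_gen V E u) \<otimes>\<^bsub>H\<^esub> f (racg_gen V E v)) = \<one>\<^bsub>H\<^esub>"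
    using racg_gen_commutator[of u V v E, OF uv] hom_one[OF f racg_group H] uv
    by (simp add: hom_mult[OF f, symmetric] racg_gen_carrier)
qed

lemma word_eval_respects:
  assumes H: "group H" and rel: "relators_hold V E H m" and "racg_eq V E xs ys"
  shows "word_eval H m xs = word_eval H m ys"
  using assms(3)
proof (induction rule: racg_eq.induct)
  case (cancel_sq xs ys a)
  have "m a \<in> carrier H" using rel cancel_sq by (auto simp: relators_hold_def)
  then have "word_eval H m [a, a] = \<one>\<^bsub>H\<^esub>"
    using rel cancel_sq by (simp add: relators_hold_def group.is_monoid[OF H] monoid.r_one)
  then show ?case
    using rel cancel_sq by (intro word_eval_cancel[OF H]) (auto simp: relators_hold_def)
next
  case (cancel_comm xs ys a b)
  interpret group H by (rule H)
  have "m a \<in> carrier H" "m b \<in> carrier H" using rel cancel_comm by (auto simp: relators_hold_def)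
  then have "word_eval H m [a, b, a, b] = m a \<otimes>\<^bsub>H\<^esub> m b \<otimes>\<^bsub>H\<^esub> (m a \<otimes>\<^bsub>H\<^esub> m b)"
    by (simp add: m_assoc)
  also have "\<dots> = \<one>\<^bsub>H\<^esub>"
    using rel cancel_comm by (simp add: relators_hold_def)
  finally have "word_eval H m [a, b, a, b] = \<one>\<^bsub>H\<^esub>" .
  then show ?case
    using rel cancel_comm by (intro word_eval_cancel[OF H]) (auto simp: relators_hold_def)
qed auto

definition racg_lift :: "('h, 'm) monoid_scheme \<Rightarrow> ('a \<Rightarrow> 'h) \<Rightarrow> 'a list set \<Rightarrow> 'h" where
  "racg_lift H m S = word_eval H m (SOME xs. xs \<in> S)"

lemma racg_lift_class:
  assumes H: "group H" and rel: "relators_hold V E H m" and xs: "set xs \<subseteq> V"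
  shows "racg_lift H m (racg_class V E xs) = word_eval H m xs"
proof -
  have "xs \<in> racg_class V E xs" using xs by (simp add: racg_class_def racg_eq.refl)
  then have "(SOME ys. ys \<in> racg_class V E xs) \<in> racg_class V E xs" by (rule someI)
  then have "racg_eq V E xs (SOME ys. ys \<in> racg_class V E xs)" by (simp add: racg_class_def)
  then show ?thesis unfolding racg_lift_def using word_eval_respects[OF H rel] by metis
qed

lemma racg_lift_hom:
  assumes H: "group H" and rel: "relators_hold V E H m"
  shows "racg_lift H m \<in> hom (racg V E) H"
proof (rule homI)
  have cl: "set xs \<subseteq> V \<Longrightarrow> m ` set xs \<subseteq> carrier H" for xs
    using rel by (auto simp: relators_hold_def)
  fix x
  assume "x \<in> carrier (racg V E)"
  then show "racg_lift H m x \<in> carrier H"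
    using cl by (auto simp: racg_carrier_iff racg_lift_class[OF H rel] word_eval_closed[OF H])
next
  have cl: "set xs \<subseteq> V \<Longrightarrow> m ` set xs \<subseteq> carrier H" for xs
    using rel by (auto simp: relators_hold_def)
  fix x y
  assume "x \<in> carrier (racg V E)" and "y \<in> carrier (racg V E)"
  then show "racg_lift H m (x \<otimes>\<^bsub>racg V E\<^esub> y) = racg_lift H m x \<otimes>\<^bsub>H\<^esub> racg_lift H m y"
    using cl by (auto simp: racg_carrier_iff racg_class_mult racg_lift_class[OF H rel] word_eval_append[OF H])
qed

lemma racg_lift_gen:
  assumes H: "group H" and rel: "relators_hold V E H m" and v: "v \<in> V"
  shows "racg_lift H m (racg_gen V E v) = m v"
proof -
  have "m v \<in> carrier H" using rel v by (auto simp: relators_hold_def)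
  then show ?thesis
    using v racg_lift_class[OF H rel, of "[v]"]
    by (simp add: racg_gen_def group.is_monoid[OF H] monoid.r_one)
qed

definition graph_hom :: "'a set \<Rightarrow> ('a \<Rightarrow> 'a \<Rightarrow> bool) \<Rightarrow> 'b set \<Rightarrow> ('b \<Rightarrow> 'b \<Rightarrow> bool) \<Rightarrow> ('a \<Rightarrow> 'b) \<Rightarrow> bool" where
  "graph_hom V E W E' m \<longleftrightarrow> m ` V \<subseteq> W \<and> (\<forall>u\<in>V. \<forall>v\<in>V. E u v \<longrightarrow> E' (m u) (m v))"

lemma racg_eq_map:
  assumes m: "graph_hom V E W E' m" and "racg_eq V E xs ys"
  shows "racg_eq W E' (map m xs) (map m ys)"
  using assms(2)
proof (induction rule: racg_eq.induct)
  case (refl xs)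
  then show ?case using m by (intro racg_eq.refl) (auto simp: graph_hom_def)
next
  case (sym xs ys)
  then show ?case by (blast intro: racg_eq.sym)
next
  case (trans xs ys zs)
  then show ?case by (blast intro: racg_eq.trans)
next
  case (cancel_sq xs ys a)
  then show ?case
    using racg_eq.cancel_sq[of "map m xs" W "map m ys" "m a" E'] m by (auto simp: graph_hom_def)
next
  case (cancel_comm xs ys a b)
  then show ?case
    using racg_eq.cancel_comm[of "map m xs" W "map m ys" "m a" "m b" E'] m by (auto simp: graph_hom_def)
qed

lemma racg_induced_class:
  assumes m: "graph_hom V E W E' m" and xs: "set xs \<subseteq> V"
  shows "racg_induced W E' m (racg_class V E xs) = racg_class W E' (map m xs)"
  unfolding racg_induced_def racg_class_def
proof safe
  fix zs xs'
  assume "racg_eq V E xs xs'" and "racg_eq W E' (map m xs') zs"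
  then show "racg_eq W E' (map m xs) zs" using racg_eq_map[OF m] by (meson racg_eq.trans)
next
  fix zs
  assume "racg_eq W E' (map m xs) zs"
  then show "\<exists>xs'\<in>{ys. racg_eq V E xs ys}. racg_eq W E' (map m xs') zs"
    using xs by (auto intro: racg_eq.refl)
qed

lemma racg_induced_hom:
  assumes m: "graph_hom V E W E' m"
  shows "racg_induced W E' m \<in> hom (racg V E) (racg W E')"
proof (rule homI)
  have mV: "set xs \<subseteq> V \<Longrightarrow> set (map m xs) \<subseteq> W" for xs
    using m by (auto simp: graph_hom_def)
  fix x
  assume "x \<in> carrier (racg V E)"
  then show "racg_induced W E' m x \<in> carrier (racg W E')"
    using mV by (auto simp: racg_carrier_iff[of x] racg_induced_class[OF m] racg_class_carrier)
next
  have mV: "set xs \<subseteq> V \<Longrightarrow> set (map m xs) \<subseteq> W" for xs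
    using m by (auto simp: graph_hom_def)
  fix x y
  assume "x \<in> carrier (racg V E)" and "y \<in> carrier (racg V E)"
  then show "racg_induced W E' m (x \<otimes>\<^bsub>racg V E\<^esub> y) =
      racg_induced W E' m x \<otimes>\<^bsub>racg W E'\<^esub> racg_induced W E' m y"
    using mV by (auto simp: racg_carrier_iff racg_induced_class[OF m] racg_class_mult)
qed

lemma racg_induced_gen:
  "graph_hom V E W E' m \<Longrightarrow> v \<in> V \<Longrightarrow> racg_induced W E' m (racg_gen V E v) = racg_gen W E' (m v)"
  using racg_induced_class[of V E W E' m "[v]"] by (simp add: racg_gen_def)

section \<open>Standard subgroups\<close>

definition full_embedding :: "'a set \<Rightarrow> ('a \<Rightarrow> 'a \<Rightarrow> bool) \<Rightarrow> 'b set \<Rightarrow> ('b \<Rightarrow> 'b \<Rightarrow> bool) \<Rightarrow> ('a \<Rightarrow> 'b) \<Rightarrow> bool" where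
  "full_embedding V E W E' c \<longleftrightarrow>
     graph_hom V E W E' c \<and> inj_on c V \<and> (\<forall>u\<in>V. \<forall>v\<in>V. E' (c u) (c v) \<longrightarrow> E u v)"

definition retraction_gens :: "'a set \<Rightarrow> ('a \<Rightarrow> 'a \<Rightarrow> bool) \<Rightarrow> ('a \<Rightarrow> 'b) \<Rightarrow> 'b \<Rightarrow> 'a list set" where
  "retraction_gens V E c w =
     (if w \<in> c ` V then racg_gen V E (the_inv_into V c w) else \<one>\<^bsub>racg V E\<^esub>)"

lemma retraction_gens_image:
  "inj_on c V \<Longrightarrow> v \<in> V \<Longrightarrow> retraction_gens V E c (c v) = racg_gen V E v"
  by (simp add: retraction_gens_def the_inv_into_f_f)

text \<open>Since a full embedding reflects adjacency, this assignment respects the relators.\<close>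
lemma retraction_gens_relators:
  assumes c: "full_embedding V E W E' c"
  shows "relators_hold W E' (racg V E) (retraction_gens V E c)"
proof -
  let ?G = "racg V E" and ?m = "retraction_gens V E c"
  have inj: "inj_on c V" and reflect: "\<And>u v. u \<in> V \<Longrightarrow> v \<in> V \<Longrightarrow> E' (c u) (c v) \<Longrightarrow> E u v"
    using c by (auto simp: full_embedding_def)
  interpret G: group ?G by (rule racg_group)
  have closed: "?m ` W \<subseteq> carrier ?G"
    by (auto simp: retraction_gens_def intro!: racg_gen_carrier the_inv_into_into[OF inj])
  have square: "?m w \<otimes>\<^bsub>?G\<^esub> ?m w = \<one>\<^bsub>?G\<^esub>" for w
  proof (cases "w \<in> c ` V")
    case True
    then show ?thesis by (auto simp: retraction_gens_image[OF inj] racg_gen_square)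
  next
    case False
    then show ?thesis by (simp add: retraction_gens_def)
  qed
  have commute: "?m u = \<one>\<^bsub>?G\<^esub> \<or> ?m w = \<one>\<^bsub>?G\<^esub> \<or> ?m u \<otimes>\<^bsub>?G\<^esub> ?m w \<otimes>\<^bsub>?G\<^esub> (?m u \<otimes>\<^bsub>?G\<^esub> ?m w) = \<one>\<^bsub>?G\<^esub>"
    if "E' u w" for u w
  proof (cases "u \<in> c ` V \<and> w \<in> c ` V")
    case True
    then obtain i j where "i \<in> V" "u = c i" "j \<in> V" "w = c j" by auto
    then show ?thesis
      using reflect \<open>E' u w\<close> by (simp add: retraction_gens_image[OF inj] racg_gen_commutator)
  next
    case False
    then show ?thesis by (auto simp: retraction_gens_def)
  qed
  show ?thesis
    using square commute by (intro relators_holdI[OF racg_group closed])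
qed

lemma racg_retraction:
  assumes c: "full_embedding V E W E' c"
  obtains \<rho> where "\<rho> \<in> hom (racg W E') (racg V E)"
    and "\<And>x. x \<in> carrier (racg V E) \<Longrightarrow> \<rho> (racg_induced W E' c x) = x"
proof -
  let ?G = "racg V E" and ?\<rho> = "racg_lift (racg V E) (retraction_gens V E c)"
  have cV: "graph_hom V E W E' c" and inj: "inj_on c V"
    using c by (auto simp: full_embedding_def)
  note rel = retraction_gens_relators[OF c]
  have \<rho>: "?\<rho> \<in> hom (racg W E') ?G"
    by (rule racg_lift_hom[OF racg_group rel])
  have id_hom: "(\<lambda>x. x) \<in> hom ?G ?G" by (rule homI) auto
  have "(?\<rho> \<circ> racg_induced W E' c) x = x" if "x \<in> carrier ?G" for x
  proof (rule racg_hom_eqI[OF racg_group hom_compose[OF racg_induced_hom[OF cV] \<rho>] id_hom _ that])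
    fix v
    assume "v \<in> V"
    moreover then have "c v \<in> W" using cV by (auto simp: graph_hom_def)
    ultimately show "(?\<rho> \<circ> racg_induced W E' c) (racg_gen V E v) = racg_gen V E v"
      by (simp add: racg_induced_gen[OF cV] racg_lift_gen[OF racg_group rel] retraction_gens_image[OF inj])
  qed
  then show ?thesis using that \<rho> by simp
qed

lemma standard_subgroup:
  assumes c: "full_embedding V E W E' c"
  shows "racg_induced W E' c \<in> hom (racg V E) (racg W E')
    \<and> inj_on (racg_induced W E' c) (carrier (racg V E))
    \<and> racg_induced W E' c ` carrier (racg V E) = generate (racg W E') (racg_gen W E' ` c ` V)"
proof (intro conjI)
  have cV: "graph_hom V E W E' c" using c by (simp add: full_embedding_def)
  show hom: "racg_induced W E' c \<in> hom (racg V E) (racg W E')"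
    by (rule racg_induced_hom[OF cV])
  obtain \<rho> where "\<rho> \<in> hom (racg W E') (racg V E)"
    and retract: "\<And>x. x \<in> carrier (racg V E) \<Longrightarrow> \<rho> (racg_induced W E' c x) = x"
    using racg_retraction[OF c] by metis
  from retract show "inj_on (racg_induced W E' c) (carrier (racg V E))"
    by (rule inj_on_inverseI)
  have "(\<lambda>v. racg_induced W E' c (racg_gen V E v)) ` V = racg_gen W E' ` c ` V"
    unfolding image_image by (rule image_cong) (simp_all add: racg_induced_gen[OF cV])
  with racg_hom_image[OF racg_group hom]
  show "racg_induced W E' c ` carrier (racg V E) = generate (racg W E') (racg_gen W E' ` c ` V)"
    by (simp only:)
qed

lemma kgon_face_embedding:
  assumes P: "face_structure V E" and F: "kgon_face V E F k c"
  shows "full_embedding {..<k} (cyc_adj k) (V - {F}) E c"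
proof -
  have "c j \<in> V - {F}" if "j < k" for j
  proof -
    have "E F (c j)" using F that by (auto simp: kgon_face_def)
    then show ?thesis using P by (auto simp: face_structure_def)
  qed
  then show ?thesis
    using F by (auto simp: full_embedding_def graph_hom_def kgon_face_def cyc_adj_def)
qed

section \<open>Composition of polyhedra\<close>

locale polyhedra_composition =
  fixes V1 :: "'a set" and E1 :: "'a \<Rightarrow> 'a \<Rightarrow> bool" and F1 :: 'a
    and V2 :: "'b set" and E2 :: "'b \<Rightarrow> 'b \<Rightarrow> bool" and F2 :: 'b
    and k :: nat and c1 :: "nat \<Rightarrow> 'a" and c2 :: "nat \<Rightarrow> 'b"
  assumes P1: "face_structure V1 E1" and P2: "face_structure V2 E2"
    and F1: "kgon_face V1 E1 F1 k c1" and F2: "kgon_face V2 E2 F2 k c2"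
begin

abbreviation VP where "VP \<equiv> comp_faces V1 F1 V2 F2 k c2"
abbreviation EP where "EP \<equiv> comp_adj V1 E1 F1 V2 E2 F2 k c1 c2"
abbreviation merge where "merge \<equiv> comp_map2 k c1 c2"

lemma face_emb1: "full_embedding {..<k} (cyc_adj k) (V1 - {F1}) E1 c1"
  by (rule kgon_face_embedding[OF P1 F1])

lemma face_emb2: "full_embedding {..<k} (cyc_adj k) (V2 - {F2}) E2 c2"
  by (rule kgon_face_embedding[OF P2 F2])

lemma face_hom1: "graph_hom {..<k} (cyc_adj k) (V1 - {F1}) E1 c1"
  using face_emb1 by (simp add: full_embedding_def)

lemma face_hom2: "graph_hom {..<k} (cyc_adj k) (V2 - {F2}) E2 c2"
  using face_emb2 by (simp add: full_embedding_def)

lemma merge_adjacent: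
  assumes j: "j < k"
  shows "merge (c2 j) = Inl (c1 j)"
proof -
  have inj: "inj_on c2 {..<k}" using face_emb2 by (simp add: full_embedding_def)
  have "(THE i. i < k \<and> c2 j = c2 i) = j"
    using j inj by (intro the_equality) (auto dest: inj_onD)
  then show ?thesis using j by (auto simp: comp_map2_def)
qed

lemma merge_other: "b \<notin> c2 ` {..<k} \<Longrightarrow> merge b = Inr b"
  by (auto simp: comp_map2_def)

lemma comp_faces_eq: "VP = Inl ` (V1 - {F1}) \<union> Inr ` (V2 - {F2} - c2 ` {..<k})"
  by (simp add: comp_faces_def)

lemma Inl_graph_hom: "graph_hom (V1 - {F1}) E1 VP EP Inl"
  by (auto simp: graph_hom_def comp_faces_def comp_adj_def)

lemma merge_graph_hom: "graph_hom (V2 - {F2}) E2 VP EP merge"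
proof -
  have "merge b \<in> VP" if b: "b \<in> V2 - {F2}" for b
  proof (cases "b \<in> c2 ` {..<k}")
    case True
    then obtain j where "j < k" "b = c2 j" by auto
    moreover have "c1 j \<in> V1 - {F1}"
      using face_hom1 \<open>j < k\<close> by (auto simp: graph_hom_def)
    ultimately show ?thesis by (simp add: merge_adjacent comp_faces_eq)
  next
    case False
    then show ?thesis using b by (simp add: merge_other comp_faces_eq)
  qed
  then show ?thesis by (auto simp: graph_hom_def comp_adj_def)
qed

text \<open>Both ways of embedding the reflection group of the k-gon agree: the composition
  identifies c1 j with c2 j.\<close>
lemma amalgam_commutes:
  assumes x: "x \<in> carrier (racg {..<k} (cyc_adj k))"
  shows "racg_induced VP EP Inl (racg_induced (V1 - {F1}) E1 c1 x)
       = racg_induced VP EP merge (racg_induced (V2 - {F2}) E2 c2 x)"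
proof -
  have "(racg_induced VP EP Inl \<circ> racg_induced (V1 - {F1}) E1 c1) x
      = (racg_induced VP EP merge \<circ> racg_induced (V2 - {F2}) E2 c2) x"
  proof (rule racg_hom_eqI[OF racg_group _ _ _ x])
    show "racg_induced VP EP Inl \<circ> racg_induced (V1 - {F1}) E1 c1 \<in> hom (racg {..<k} (cyc_adj k)) (racg VP EP)"
      by (rule hom_compose[OF racg_induced_hom[OF face_hom1] racg_induced_hom[OF Inl_graph_hom]])
    show "racg_induced VP EP merge \<circ> racg_induced (V2 - {F2}) E2 c2 \<in> hom (racg {..<k} (cyc_adj k)) (racg VP EP)"
      by (rule hom_compose[OF racg_induced_hom[OF face_hom2] racg_induced_hom[OF merge_graph_hom]])
    fix j
    assume "j \<in> {..<k}"
    moreover then have "c1 j \<in> V1 - {F1}" "c2 j \<in> V2 - {F2}"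
      using face_hom1 face_hom2 by (auto simp: graph_hom_def)
    ultimately show "(racg_induced VP EP Inl \<circ> racg_induced (V1 - {F1}) E1 c1) (racg_gen {..<k} (cyc_adj k) j)
      = (racg_induced VP EP merge \<circ> racg_induced (V2 - {F2}) E2 c2) (racg_gen {..<k} (cyc_adj k) j)"
      by (simp add: racg_induced_gen[OF face_hom1] racg_induced_gen[OF face_hom2]
          racg_induced_gen[OF Inl_graph_hom] racg_induced_gen[OF merge_graph_hom] merge_adjacent)
  qed
  then show ?thesis by simp
qed

lemma comp_gen_from_pieces:
  assumes v: "v \<in> VP"
  shows "(\<exists>a\<in>V1 - {F1}. racg_gen VP EP v = racg_induced VP EP Inl (racg_gen (V1 - {F1}) E1 a))
    \<or> (\<exists>b\<in>V2 - {F2}. racg_gen VP EP v = racg_induced VP EP merge (racg_gen (V2 - {F2}) E2 b))"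
proof -
  from v consider (left) a where "a \<in> V1 - {F1}" "v = Inl a"
    | (right) b where "b \<in> V2 - {F2}" "b \<notin> c2 ` {..<k}" "v = Inr b"
    by (auto simp: comp_faces_eq)
  then show ?thesis
  proof cases
    case left
    then have "racg_gen VP EP v = racg_induced VP EP Inl (racg_gen (V1 - {F1}) E1 a)"
      by (simp add: racg_induced_gen[OF Inl_graph_hom])
    with left show ?thesis by blast
  next
    case right
    then have "racg_gen VP EP v = racg_induced VP EP merge (racg_gen (V2 - {F2}) E2 b)"
      by (simp add: racg_induced_gen[OF merge_graph_hom] merge_other)
    with right show ?thesis by blast
  qed
qed

definition glue :: "('a list set \<Rightarrow> 'h) \<Rightarrow> ('b list set \<Rightarrow> 'h) \<Rightarrow> 'a + 'b \<Rightarrow> 'h" where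
  "glue f g x = (case x of Inl a \<Rightarrow> f (racg_gen (V1 - {F1}) E1 a) | Inr b \<Rightarrow> g (racg_gen (V2 - {F2}) E2 b))"

lemma glue_merge:
  assumes compat: "\<forall>x\<in>carrier (racg {..<k} (cyc_adj k)).
      f (racg_induced (V1 - {F1}) E1 c1 x) = g (racg_induced (V2 - {F2}) E2 c2 x)"
  shows "glue f g (merge b) = g (racg_gen (V2 - {F2}) E2 b)"
proof (cases "b \<in> c2 ` {..<k}")
  case True
  then obtain j where j: "j < k" "b = c2 j" by auto
  have "glue f g (merge b) = f (racg_induced (V1 - {F1}) E1 c1 (racg_gen {..<k} (cyc_adj k) j))"
    using j by (simp add: glue_def merge_adjacent racg_induced_gen[OF face_hom1])
  also have "\<dots> = g (racg_induced (V2 - {F2}) E2 c2 (racg_gen {..<k} (cyc_adj k) j))"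
    using compat j by (simp add: racg_gen_carrier)
  also have "\<dots> = g (racg_gen (V2 - {F2}) E2 b)"
    using j by (simp add: racg_induced_gen[OF face_hom2])
  finally show ?thesis .
next
  case False
  then show ?thesis by (simp add: glue_def merge_other)
qed

text \<open>Consequently the glued assignment satisfies the relators of the composition: they
  are relators of P1 - F1 or (after merging) of P2 - F2.\<close>
lemma glue_relators:
  assumes H: "group H" and f: "f \<in> hom (racg (V1 - {F1}) E1) H" and g: "g \<in> hom (racg (V2 - {F2}) E2) H"
    and compat: "\<forall>x\<in>carrier (racg {..<k} (cyc_adj k)).
      f (racg_induced (V1 - {F1}) E1 c1 x) = g (racg_induced (V2 - {F2}) E2 c2 x)"
  shows "relators_hold VP EP H (glue f g)"
proof -
  have rf: "relators_hold (V1 - {F1}) E1 H (\<lambda>a. f (racg_gen (V1 - {F1}) E1 a))"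
    and rg: "relators_hold (V2 - {F2}) E2 H (\<lambda>b. g (racg_gen (V2 - {F2}) E2 b))"
    using relators_hold_hom[OF H f] relators_hold_hom[OF H g] .
  have "glue f g ` VP \<subseteq> carrier H" "\<forall>v\<in>VP. glue f g v \<otimes>\<^bsub>H\<^esub> glue f g v = \<one>\<^bsub>H\<^esub>"
    using rf rg by (auto simp: comp_faces_eq glue_def relators_hold_def)
  moreover have "glue f g u \<otimes>\<^bsub>H\<^esub> glue f g v \<otimes>\<^bsub>H\<^esub> (glue f g u \<otimes>\<^bsub>H\<^esub> glue f g v) = \<one>\<^bsub>H\<^esub>"
    if "EP u v" for u v
    using that unfolding comp_adj_def
  proof (elim disjE exE conjE)
    fix a b
    assume "a \<in> V1 - {F1}" "b \<in> V1 - {F1}" "E1 a b" "u = Inl a" "v = Inl b"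
    then show ?thesis using rf by (simp add: relators_hold_def glue_def)
  next
    fix a b
    assume "a \<in> V2 - {F2}" "b \<in> V2 - {F2}" "E2 a b" "u = merge a" "v = merge b"
    then show ?thesis using rg glue_merge[OF compat] by (simp add: relators_hold_def)
  qed
  ultimately show ?thesis by (simp add: relators_hold_def)
qed

lemma amalgam_extension:
  assumes H: "group H" and f: "f \<in> hom (racg (V1 - {F1}) E1) H" and g: "g \<in> hom (racg (V2 - {F2}) E2) H"
    and compat: "\<forall>x\<in>carrier (racg {..<k} (cyc_adj k)).
      f (racg_induced (V1 - {F1}) E1 c1 x) = g (racg_induced (V2 - {F2}) E2 c2 x)"
  shows "\<exists>h\<in>hom (racg VP EP) H.
           (\<forall>x\<in>carrier (racg (V1 - {F1}) E1). h (racg_induced VP EP Inl x) = f x)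
         \<and> (\<forall>y\<in>carrier (racg (V2 - {F2}) E2). h (racg_induced VP EP merge y) = g y)"
proof -
  note rel = glue_relators[OF H f g compat]
  let ?h = "racg_lift H (glue f g)"
  have h: "?h \<in> hom (racg VP EP) H" by (rule racg_lift_hom[OF H rel])
  have Inl_VP: "Inl a \<in> VP" if "a \<in> V1 - {F1}" for a
    using that Inl_graph_hom by (auto simp: graph_hom_def)
  have merge_VP: "merge b \<in> VP" if "b \<in> V2 - {F2}" for b
    using that merge_graph_hom by (auto simp: graph_hom_def)
  have "(?h \<circ> racg_induced VP EP Inl) x = f x" if x: "x \<in> carrier (racg (V1 - {F1}) E1)" for x
    by (rule racg_hom_eqI[OF H hom_compose[OF racg_induced_hom[OF Inl_graph_hom] h] f _ x])
       (simp add: racg_induced_gen[OF Inl_graph_hom] racg_lift_gen[OF H rel] Inl_VP glue_def)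
  moreover have "(?h \<circ> racg_induced VP EP merge) y = g y" if y: "y \<in> carrier (racg (V2 - {F2}) E2)" for y
    by (rule racg_hom_eqI[OF H hom_compose[OF racg_induced_hom[OF merge_graph_hom] h] g _ y])
       (simp add: racg_induced_gen[OF merge_graph_hom] racg_lift_gen[OF H rel] merge_VP glue_merge[OF compat])
  ultimately show ?thesis using h by auto
qed

text \<open>Uniqueness half: the images of the two pieces generate the composed group.\<close>
lemma amalgam_uniqueness:
  assumes H: "group H" and h: "h \<in> hom (racg VP EP) H" and h': "h' \<in> hom (racg VP EP) H"
    and on1: "\<forall>x\<in>carrier (racg (V1 - {F1}) E1). h (racg_induced VP EP Inl x) = h' (racg_induced VP EP Inl x)"
    and on2: "\<forall>y\<in>carrier (racg (V2 - {F2}) E2). h (racg_induced VP EP merge y) = h' (racg_induced VP EP merge y)"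
    and z: "z \<in> carrier (racg VP EP)"
  shows "h z = h' z"
proof (rule racg_hom_eqI[OF H h h' _ z])
  fix v
  assume "v \<in> VP"
  then show "h (racg_gen VP EP v) = h' (racg_gen VP EP v)"
    using comp_gen_from_pieces on1 on2 racg_gen_carrier by metis
qed

end

theorem mainTheorem10:
  fixes V1 :: "'a set" and E1 :: "'a \<Rightarrow> 'a \<Rightarrow> bool" and F1 :: 'a
    and V2 :: "'b set" and E2 :: "'b \<Rightarrow> 'b \<Rightarrow> bool" and F2 :: 'b
    and k :: nat and c1 :: "nat \<Rightarrow> 'a" and c2 :: "nat \<Rightarrow> 'b"
  assumes P1: "face_structure V1 E1" and P2: "face_structure V2 E2"
    and k3: "3 \<le> k"
    and F1: "kgon_face V1 E1 F1 k c1" and F2: "kgon_face V2 E2 F2 k c2"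
  defines "A \<equiv> racg (V1 - {F1}) E1"
    and "B \<equiv> racg (V2 - {F2}) E2"
    and "G \<equiv> racg {..<k} (cyc_adj k)"
    and "P \<equiv> racg (comp_faces V1 F1 V2 F2 k c2) (comp_adj V1 E1 F1 V2 E2 F2 k c1 c2)"
    and "j1 \<equiv> racg_induced (V1 - {F1}) E1 c1"
    and "j2 \<equiv> racg_induced (V2 - {F2}) E2 c2"
    and "i1 \<equiv> racg_induced (comp_faces V1 F1 V2 F2 k c2) (comp_adj V1 E1 F1 V2 E2 F2 k c1 c2) Inl"
    and "i2 \<equiv> racg_induced (comp_faces V1 F1 V2 F2 k c2) (comp_adj V1 E1 F1 V2 E2 F2 k c1 c2)
                 (comp_map2 k c1 c2)"
  shows "group A \<and> group B \<and> group G \<and> group P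
    \<and> j1 \<in> hom G A \<and> inj_on j1 (carrier G)
    \<and> j1 ` carrier G = generate A (racg_gen (V1 - {F1}) E1 ` c1 ` {..<k})
    \<and> j2 \<in> hom G B \<and> inj_on j2 (carrier G)
    \<and> j2 ` carrier G = generate B (racg_gen (V2 - {F2}) E2 ` c2 ` {..<k})
    \<and> i1 \<in> hom A P \<and> i2 \<in> hom B P
    \<and> (\<forall>x\<in>carrier G. i1 (j1 x) = i2 (j2 x))
    \<and> (\<forall>(H :: ('h, 'm) monoid_scheme) f g. group H \<longrightarrow> f \<in> hom A H \<longrightarrow> g \<in> hom B H \<longrightarrow>
         (\<forall>x\<in>carrier G. f (j1 x) = g (j2 x)) \<longrightarrow>
         (\<exists>h\<in>hom P H. (\<forall>x\<in>carrier A. h (i1 x) = f x) \<and> (\<forall>y\<in>carrier B. h (i2 y) = g y))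
         \<and> (\<forall>h h'. h \<in> hom P H \<longrightarrow> h' \<in> hom P H \<longrightarrow>
               (\<forall>x\<in>carrier A. h (i1 x) = h' (i1 x)) \<longrightarrow> (\<forall>y\<in>carrier B. h (i2 y) = h' (i2 y)) \<longrightarrow>
               (\<forall>z\<in>carrier P. h z = h' z)))"
proof -
  interpret polyhedra_composition V1 E1 F1 V2 E2 F2 k c1 c2
    using P1 P2 F1 F2 by unfold_locales
  note face_groups = standard_subgroup[OF face_emb1] standard_subgroup[OF face_emb2]
  note piece_homs = racg_induced_hom[OF Inl_graph_hom] racg_induced_hom[OF merge_graph_hom]
  show ?thesis
    unfolding A_def B_def G_def P_def j1_def j2_def i1_def i2_def
    using face_groups piece_homs
    by (intro conjI allI impI ballI racg_group amalgam_commutes amalgam_extension)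
       (assumption | blast intro: amalgam_uniqueness)+
qed

end
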